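(* Let $I\ge0$, $\beta>0$, $\alpha,\omega\in S_I$ with $\alpha_0>0$. The endpoint constraint $(\alpha,\omega,\beta)$ is feasible if and only if $$\sum_{j=0}^i\alpha_j\ge\sum_{j=0}^i\omega_j\quad (i=0,\dots,I)$$ and $$\sum_{i=0}^I i\omega_i+(I+1)\omega_{I+}\le\sum_{k=0}^{I+1}k\alpha_k+\beta.$$
   Context: $S_I=\{\gamma\in\mathbb{R}^{I+2}:\gamma_j\ge0,\sum_{j=0}^{I+1}\gamma_j=1\}$; components of $\alpha$ are written $\alpha_0,\dots,\alpha_{I+1}$ and of $\omega$ as $\omega_0,\dots,\omega_I,\omega_{I+}$. A valid occupancy function on $[0,\beta]$ is an absolutely continuous $\gamma:[0,\beta]\to S_I$ whose rate $\theta$ (defined by $\dot\gamma_0=-\theta_0$, $\dot\gamma_j=\theta_{j-1}-\theta_j$ for $1\le j\le I$, $\dot\gamma_{I+}=\theta_I$, $\sum_j\theta_j=1$) lies in $S_I$ for a.e. $x$. $(\alpha,\omega,\beta)$ is feasible if there exists a valid occupancy function $\gamma$ on $[0,\beta]$ with $\gamma(0)=\alpha$ and $\gamma(\beta)=\omega$. *)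

theory Defs
  imports "HOL-Analysis.Analysis"
begin

text \<open>Points of R^(I+2) are represented as functions nat => real; only the
components 0..I+1 are meaningful, component I+1 playing the role of the
component "I+".\<close>

definition simplexI :: "nat \<Rightarrow> (nat \<Rightarrow> real) set" where
  "simplexI I = {g. (\<forall>j\<le>I+1. 0 \<le> g j) \<and> (\<Sum>j\<le>I+1. g j) = 1}"

definition abs_cont_on :: "real \<Rightarrow> real \<Rightarrow> (real \<Rightarrow> real) \<Rightarrow> bool" where
  "abs_cont_on a b f \<longleftrightarrow>
     (\<forall>e>0. \<exists>d>0. \<forall>(n::nat) (u::nat \<Rightarrow> real) (v::nat \<Rightarrow> real).
        (\<forall>k<n. a \<le> u k \<and> u k \<le> v k \<and> v k \<le> b) \<and>
        (\<forall>k<n. \<forall>l<n. k \<noteq> l \<longrightarrow> v k \<le> u l \<or> v l \<le> u k) \<and>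
        (\<Sum>k<n. v k - u k) < d
        \<longrightarrow> (\<Sum>k<n. \<bar>f (v k) - f (u k)\<bar>) < e)"

definition rate_deriv :: "nat \<Rightarrow> (nat \<Rightarrow> real) \<Rightarrow> nat \<Rightarrow> real" where
  "rate_deriv I \<theta> j = (if j = 0 then - \<theta> 0 else if j \<le> I then \<theta> (j - 1) - \<theta> j else \<theta> I)"

definition valid_occupancy :: "nat \<Rightarrow> real \<Rightarrow> (real \<Rightarrow> nat \<Rightarrow> real) \<Rightarrow> bool" where
  "valid_occupancy I \<beta> \<gamma> \<longleftrightarrow>
     (\<forall>j\<le>I+1. abs_cont_on 0 \<beta> (\<lambda>x. \<gamma> x j)) \<and>
     (\<forall>x\<in>{0..\<beta>}. \<gamma> x \<in> simplexI I) \<and>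
     (\<exists>\<theta> :: real \<Rightarrow> nat \<Rightarrow> real.
        AE x in lebesgue. x \<in> {0..\<beta>} \<longrightarrow>
          (\<forall>j\<le>I+1. ((\<lambda>t. \<gamma> t j) has_real_derivative rate_deriv I (\<theta> x) j) (at x))
          \<and> \<theta> x \<in> simplexI I)"

definition feasible :: "nat \<Rightarrow> (nat \<Rightarrow> real) \<Rightarrow> (nat \<Rightarrow> real) \<Rightarrow> real \<Rightarrow> bool" where
  "feasible I \<alpha> \<omega> \<beta> \<longleftrightarrow>
     (\<exists>\<gamma>. valid_occupancy I \<beta> \<gamma> \<and> (\<forall>j\<le>I+1. \<gamma> 0 j = \<alpha> j) \<and> (\<forall>j\<le>I+1. \<gamma> \<beta> j = \<omega> j))"

end

theory Submission
  imports Defs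
begin

(* With Gamma_i = gamma_0 + ... + gamma_i, the rate equations say Gamma_i' = -theta_i for i <= I.
   Hence each Gamma_i is nonincreasing, which is the first condition, and
   Gamma_0 + ... + Gamma_I = (I + 1) - sum_k k gamma_k has derivative
   -(theta_0 + ... + theta_I) >= -1, which is the second condition after integration over
   [0, beta].  "Integration" is the fact that an absolutely continuous function with nonpositive
   derivative almost everywhere is nonincreasing, which follows from Cousin's lemma.
   Conversely, under the two conditions the straight line from alpha to omega is an occupancy:
   its constant rate theta_i = (Gamma_i(0) - Gamma_i(beta)) / beta for i <= I, completed by
   theta_(I+1) = 1 - (theta_0 + ... + theta_I), lies in the simplex. *)

definition nonoverlapping_intervals :: "real \<Rightarrow> real \<Rightarrow> nat \<Rightarrow> (nat \<Rightarrow> real) \<Rightarrow> (nat \<Rightarrow> real) \<Rightarrow> bool" where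
  "nonoverlapping_intervals a b n u v \<longleftrightarrow>
     (\<forall>k<n. a \<le> u k \<and> u k \<le> v k \<and> v k \<le> b) \<and>
     (\<forall>k<n. \<forall>l<n. k \<noteq> l \<longrightarrow> v k \<le> u l \<or> v l \<le> u k)"

lemma abs_cont_on_iff:
  "abs_cont_on a b f \<longleftrightarrow>
     (\<forall>e>0. \<exists>d>0. \<forall>n u v. nonoverlapping_intervals a b n u v \<longrightarrow>
        (\<Sum>k<n. v k - u k) < d \<longrightarrow> (\<Sum>k<n. \<bar>f (v k) - f (u k)\<bar>) < e)"
  unfolding abs_cont_on_def nonoverlapping_intervals_def by (simp only: imp_conjL)

lemma abs_cont_onI:
  assumes "\<And>e. e > 0 \<Longrightarrow> \<exists>d>0. \<forall>n u v. nonoverlapping_intervals a b n u v \<longrightarrow>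
             (\<Sum>k<n. v k - u k) < d \<longrightarrow> (\<Sum>k<n. \<bar>f (v k) - f (u k)\<bar>) < e"
  shows "abs_cont_on a b f"
  using assms unfolding abs_cont_on_iff by simp

lemma abs_cont_onE:
  assumes "abs_cont_on a b f" "e > 0"
  obtains d where "d > 0"
    "\<And>n u v. nonoverlapping_intervals a b n u v \<Longrightarrow> (\<Sum>k<n. v k - u k) < d \<Longrightarrow>
       (\<Sum>k<n. \<bar>f (v k) - f (u k)\<bar>) < e"
  using assms unfolding abs_cont_on_iff by blast

lemma abs_cont_on_lipschitz:
  assumes "\<And>x y. x \<in> {a..b} \<Longrightarrow> y \<in> {a..b} \<Longrightarrow> \<bar>f x - f y\<bar> \<le> L * \<bar>x - y\<bar>"
  shows "abs_cont_on a b f"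
proof (rule abs_cont_onI)
  fix e :: real assume "e > 0"
  define d where "d = e / (\<bar>L\<bar> + 1)"
  have "d > 0" and Ld: "\<bar>L\<bar> * d < e"
    using \<open>e > 0\<close> by (auto simp: d_def field_simps)
  show "\<exists>d>0. \<forall>n u v. nonoverlapping_intervals a b n u v \<longrightarrow>
          (\<Sum>k<n. v k - u k) < d \<longrightarrow> (\<Sum>k<n. \<bar>f (v k) - f (u k)\<bar>) < e"
  proof (intro exI[of _ d] conjI allI impI)
    fix n u v assume uv: "nonoverlapping_intervals a b n u v" and len: "(\<Sum>k<n. v k - u k) < d"
    have "(\<Sum>k<n. \<bar>f (v k) - f (u k)\<bar>) \<le> (\<Sum>k<n. \<bar>L\<bar> * (v k - u k))"
    proof (rule sum_mono)
      fix k assume "k \<in> {..<n}"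
      then have "a \<le> u k" "u k \<le> v k" "v k \<le> b"
        using uv by (auto simp: nonoverlapping_intervals_def)
      then have "\<bar>f (v k) - f (u k)\<bar> \<le> L * \<bar>v k - u k\<bar>" by (intro assms) auto
      also have "\<dots> \<le> \<bar>L\<bar> * (v k - u k)" using \<open>u k \<le> v k\<close> by (simp add: mult_right_mono)
      finally show "\<bar>f (v k) - f (u k)\<bar> \<le> \<bar>L\<bar> * (v k - u k)" .
    qed
    also have "\<dots> \<le> \<bar>L\<bar> * d"
      using len by (simp add: sum_distrib_left[symmetric] mult_left_mono)
    finally show "(\<Sum>k<n. \<bar>f (v k) - f (u k)\<bar>) < e" using Ld by linarith
  qed (fact \<open>d > 0\<close>)
qed

lemma abs_cont_on_const: "abs_cont_on a b (\<lambda>x. c)"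
  by (rule abs_cont_on_lipschitz[where L = 0]) simp

lemma abs_cont_on_affine: "abs_cont_on a b (\<lambda>x. c + x * r)"
  by (rule abs_cont_on_lipschitz[where L = "\<bar>r\<bar>"]) (simp add: abs_mult[symmetric] algebra_simps)

lemma abs_cont_on_add:
  assumes f: "abs_cont_on a b f" and g: "abs_cont_on a b g"
  shows "abs_cont_on a b (\<lambda>x. f x + g x)"
proof (rule abs_cont_onI)
  fix e :: real assume "e > 0"
  obtain d1 where "d1 > 0" and D1: "\<And>n u v. nonoverlapping_intervals a b n u v \<Longrightarrow>
      (\<Sum>k<n. v k - u k) < d1 \<Longrightarrow> (\<Sum>k<n. \<bar>f (v k) - f (u k)\<bar>) < e / 2"
    using abs_cont_onE[OF f, of "e / 2"] \<open>e > 0\<close> by auto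
  obtain d2 where "d2 > 0" and D2: "\<And>n u v. nonoverlapping_intervals a b n u v \<Longrightarrow>
      (\<Sum>k<n. v k - u k) < d2 \<Longrightarrow> (\<Sum>k<n. \<bar>g (v k) - g (u k)\<bar>) < e / 2"
    using abs_cont_onE[OF g, of "e / 2"] \<open>e > 0\<close> by auto
  show "\<exists>d>0. \<forall>n u v. nonoverlapping_intervals a b n u v \<longrightarrow> (\<Sum>k<n. v k - u k) < d \<longrightarrow>
          (\<Sum>k<n. \<bar>f (v k) + g (v k) - (f (u k) + g (u k))\<bar>) < e"
  proof (intro exI[of _ "min d1 d2"] conjI allI impI)
    fix n u v assume uv: "nonoverlapping_intervals a b n u v" and len: "(\<Sum>k<n. v k - u k) < min d1 d2"
    have "(\<Sum>k<n. \<bar>f (v k) + g (v k) - (f (u k) + g (u k))\<bar>)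
        \<le> (\<Sum>k<n. \<bar>f (v k) - f (u k)\<bar>) + (\<Sum>k<n. \<bar>g (v k) - g (u k)\<bar>)"
      by (simp add: sum.distrib[symmetric] sum_mono)
    also have "\<dots> < e / 2 + e / 2"
      using D1[OF uv] D2[OF uv] len by (intro add_strict_mono) auto
    finally show "(\<Sum>k<n. \<bar>f (v k) + g (v k) - (f (u k) + g (u k))\<bar>) < e" by simp
  qed (use \<open>d1 > 0\<close> \<open>d2 > 0\<close> in simp)
qed

lemma abs_cont_on_uminus:
  assumes "abs_cont_on a b f"
  shows "abs_cont_on a b (\<lambda>x. - f x)"
  using assms unfolding abs_cont_on_def by (simp add: abs_minus_commute)

lemma abs_cont_on_sum:
  assumes "finite S" "\<And>j. j \<in> S \<Longrightarrow> abs_cont_on a b (f j)"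
  shows "abs_cont_on a b (\<lambda>x. \<Sum>j\<in>S. f j x)"
  using assms
proof (induction S rule: finite_induct)
  case empty
  then show ?case using abs_cont_on_const by simp
next
  case (insert j S)
  then show ?case by (simp add: abs_cont_on_add)
qed

lemma tagged_partial_division_of_realD:
  fixes a b :: real
  assumes "p tagged_partial_division_of {a..b}" "(x, K) \<in> p"
  shows "K = {Inf K..Sup K}" "a \<le> Inf K" "Inf K \<le> x" "x \<le> Sup K" "Sup K \<le> b"
    and "measure lebesgue K = Sup K - Inf K"
proof -
  obtain u v where K: "K = {u..v}"
    using tagged_partial_division_ofD(4)[OF assms] by (auto simp: cbox_interval)
  moreover have "x \<in> K" "K \<subseteq> {a..b}"
    using tagged_partial_division_ofD(2,3)[OF assms] by auto
  ultimately have "u \<le> x" "x \<le> v" "a \<le> u" "v \<le> b"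
    by auto
  then show "K = {Inf K..Sup K}" "a \<le> Inf K" "Inf K \<le> x" "x \<le> Sup K" "Sup K \<le> b"
    and "measure lebesgue K = Sup K - Inf K"
    using K by auto
qed

lemma disjoint_greaterThanLessThan_le:
  fixes u1 v1 u2 v2 :: real
  assumes "u1 < v1" "u2 < v2" "{u1<..<v1} \<inter> {u2<..<v2} = {}"
  shows "v1 \<le> u2 \<or> v2 \<le> u1"
proof (rule ccontr)
  assume "\<not> (v1 \<le> u2 \<or> v2 \<le> u1)"
  then have "(max u1 u2 + min v1 v2) / 2 \<in> {u1<..<v1} \<inter> {u2<..<v2}"
    using assms(1,2) by (auto simp: max_def min_def)
  then show False
    using assms(3) by blast
qed

lemma tagged_partial_division_of_real_separated:
  fixes a b :: real
  assumes p: "p tagged_partial_division_of {a..b}"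
    and "(x, K) \<in> p" "(y, L) \<in> p" "(x, K) \<noteq> (y, L)" "Inf K < Sup K" "Inf L < Sup L"
  shows "Sup K \<le> Inf L \<or> Sup L \<le> Inf K"
proof (rule disjoint_greaterThanLessThan_le[OF assms(5,6)])
  have "interior K = {Inf K<..<Sup K}" "interior L = {Inf L<..<Sup L}"
    using tagged_partial_division_of_realD(1)[OF p assms(2)] tagged_partial_division_of_realD(1)[OF p assms(3)]
      interior_atLeastAtMost_real by metis+
  then show "{Inf K<..<Sup K} \<inter> {Inf L<..<Sup L} = {}"
    using tagged_partial_division_ofD(5)[OF p assms(2-4)] by simp
qed

lemma sum_tagged_partial_division_of_real_nondegenerate:
  fixes a b :: real and \<phi> :: "real \<Rightarrow> real \<Rightarrow> real"
  assumes p: "p tagged_partial_division_of {a..b}" and \<phi>: "\<And>t. \<phi> t t = 0"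
  shows "(\<Sum>(x, K)\<in>p. \<phi> (Inf K) (Sup K)) = (\<Sum>(x, K)\<in>{(x, K)\<in>p. Inf K < Sup K}. \<phi> (Inf K) (Sup K))"
proof (rule sum.mono_neutral_right)
  show "finite p"
    using p by (rule tagged_partial_division_ofD(1))
  show "\<forall>xK\<in>p - {(x, K)\<in>p. Inf K < Sup K}. (\<lambda>(x, K). \<phi> (Inf K) (Sup K)) xK = 0"
  proof
    fix xK assume "xK \<in> p - {(x, K)\<in>p. Inf K < Sup K}"
    then obtain x K where xK: "xK = (x, K)" "(x, K) \<in> p" "\<not> Inf K < Sup K"
      by auto
    then have "Inf K = Sup K"
      using tagged_partial_division_of_realD(3,4)[OF p xK(2)] by linarith
    then show "(\<lambda>(x, K). \<phi> (Inf K) (Sup K)) xK = 0"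
      using \<phi> xK(1) by simp
  qed
qed auto

(* Degenerate intervals are dropped: a point inside another interval would violate the
   nonoverlapping condition, and they contribute nothing to the sums. *)
lemma tagged_partial_division_of_real_enumerate:
  fixes a b :: real
  assumes p: "p tagged_partial_division_of {a..b}"
  shows "\<exists>n u v. nonoverlapping_intervals a b n u v \<and>
    (\<forall>\<phi> :: real \<Rightarrow> real \<Rightarrow> real. (\<forall>t. \<phi> t t = 0) \<longrightarrow>
       (\<Sum>(x, K)\<in>p. \<phi> (Inf K) (Sup K)) = (\<Sum>k<n. \<phi> (u k) (v k)))"
proof -
  have K: "a \<le> Inf K \<and> Inf K \<le> Sup K \<and> Sup K \<le> b" if "(x, K) \<in> p" for x K
    using tagged_partial_division_of_realD(2-5)[OF p that] by linarith
  let ?q = "{(x, K)\<in>p. Inf K < Sup K}"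
  have "finite p"
    using p by (rule tagged_partial_division_ofD(1))
  then have "finite ?q"
    by (rule finite_subset[rotated]) auto
  then obtain h where h: "bij_betw h {..<card ?q} ?q"
    using ex_bij_betw_nat_finite unfolding lessThan_atLeast0 by blast
  define n u v where "n = card ?q" and "u k = Inf (snd (h k))" and "v k = Sup (snd (h k))" for k
  have hK: "\<exists>x K. h k = (x, K) \<and> (x, K) \<in> p \<and> Inf K < Sup K \<and> u k = Inf K \<and> v k = Sup K"
    if "k < n" for k
  proof -
    have "h k \<in> ?q"
      using bij_betwE[OF h] that by (auto simp: n_def)
    then show ?thesis
      by (auto simp: u_def v_def)
  qed
  have "a \<le> u k \<and> u k \<le> v k \<and> v k \<le> b" if "k < n" for k
    using hK[OF that] K by auto
  moreover have "v k \<le> u l \<or> v l \<le> u k" if kl: "k < n" "l < n" "k \<noteq> l" for k l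
  proof -
    obtain x K y L where "h k = (x, K)" "(x, K) \<in> p" "Inf K < Sup K" "u k = Inf K" "v k = Sup K"
      and "h l = (y, L)" "(y, L) \<in> p" "Inf L < Sup L" "u l = Inf L" "v l = Sup L"
      using hK[OF kl(1)] hK[OF kl(2)] by blast
    moreover have "h k \<noteq> h l"
      using bij_betw_imp_inj_on[OF h] kl by (auto simp: n_def dest: inj_onD)
    ultimately show ?thesis
      using tagged_partial_division_of_real_separated[OF p] by metis
  qed
  ultimately have "nonoverlapping_intervals a b n u v"
    by (simp add: nonoverlapping_intervals_def)
  moreover have "(\<Sum>(x, K)\<in>p. \<phi> (Inf K) (Sup K)) = (\<Sum>k<n. \<phi> (u k) (v k))"
    if \<phi>: "\<forall>t. \<phi> t t = 0" for \<phi> :: "real \<Rightarrow> real \<Rightarrow> real"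
  proof -
    have "(\<Sum>(x, K)\<in>p. \<phi> (Inf K) (Sup K)) = (\<Sum>(x, K)\<in>?q. \<phi> (Inf K) (Sup K))"
      using \<phi> by (intro sum_tagged_partial_division_of_real_nondegenerate[OF p]) simp
    also have "\<dots> = (\<Sum>k<n. \<phi> (u k) (v k))"
      unfolding n_def u_def v_def
      using sum.reindex_bij_betw[OF h, of "\<lambda>xK. \<phi> (Inf (snd xK)) (Sup (snd xK))"]
      by (simp add: case_prod_beta)
    finally show ?thesis .
  qed
  ultimately show ?thesis
    by blast
qed

lemma abs_cont_on_tagged_partial_division:
  fixes f :: "real \<Rightarrow> real"
  assumes "abs_cont_on a b f" "e > 0"
  obtains d where "d > 0"
    "\<And>p. p tagged_partial_division_of {a..b} \<Longrightarrow> (\<Sum>(x, K)\<in>p. measure lebesgue K) < d \<Longrightarrow>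
       (\<Sum>(x, K)\<in>p. \<bar>f (Sup K) - f (Inf K)\<bar>) < e"
proof -
  obtain d where "d > 0" and d: "\<And>n u v. nonoverlapping_intervals a b n u v \<Longrightarrow>
      (\<Sum>k<n. v k - u k) < d \<Longrightarrow> (\<Sum>k<n. \<bar>f (v k) - f (u k)\<bar>) < e"
    using abs_cont_onE[OF assms] by blast
  show thesis
  proof (rule that[OF \<open>d > 0\<close>])
    fix p assume p: "p tagged_partial_division_of {a..b}"
      and small: "(\<Sum>(x, K)\<in>p. measure lebesgue K) < d"
    obtain n u v where uv: "nonoverlapping_intervals a b n u v"
      and sums: "\<forall>\<phi> :: real \<Rightarrow> real \<Rightarrow> real. (\<forall>t. \<phi> t t = 0) \<longrightarrow>
        (\<Sum>(x, K)\<in>p. \<phi> (Inf K) (Sup K)) = (\<Sum>k<n. \<phi> (u k) (v k))"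
      using tagged_partial_division_of_real_enumerate[OF p] by blast
    have "(\<Sum>(x, K)\<in>p. measure lebesgue K) = (\<Sum>(x, K)\<in>p. Sup K - Inf K)"
      using tagged_partial_division_of_realD(6)[OF p] by (intro sum.cong) auto
    also have "\<dots> = (\<Sum>k<n. v k - u k)"
      using sums[rule_format, of "\<lambda>s t. t - s"] by simp
    finally have "(\<Sum>k<n. \<bar>f (v k) - f (u k)\<bar>) < e"
      using small by (intro d[OF uv]) simp
    then show "(\<Sum>(x, K)\<in>p. \<bar>f (Sup K) - f (Inf K)\<bar>) < e"
      using sums[rule_format, of "\<lambda>s t. \<bar>f t - f s\<bar>"] by simp
  qed
qed

lemma sum_measure_tagged_partial_division_le:
  fixes S :: "real set"
  assumes p: "p tagged_partial_division_of S"
    and "\<And>x K. (x, K) \<in> p \<Longrightarrow> K \<subseteq> T" "T \<in> lmeasurable"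
  shows "(\<Sum>(x, K)\<in>p. measure lebesgue K) \<le> measure lebesgue T"
proof -
  have D: "snd ` p division_of \<Union>(snd ` p)"
    by (rule partial_division_of_tagged_division[OF p])
  have "(\<Sum>(x, K)\<in>p. measure lebesgue K) = sum (measure lebesgue) (snd ` p)"
    using tagged_partial_division_of_Union_self[OF p]
    by (rule sum.over_tagged_division_lemma) auto
  also have "\<dots> = measure lebesgue (\<Union>(snd ` p))"
    by (rule content_division[OF D])
  also have "\<dots> \<le> measure lebesgue T"
  proof (rule measure_mono_fmeasurable)
    show "\<Union>(snd ` p) \<subseteq> T"
      using assms(2) by force
  qed (use lmeasurable_division[OF D] assms(3) in \<open>auto simp: fmeasurable_def\<close>)
  finally show ?thesis .
qed

lemma lebesgue_null_set_open_cover: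
  assumes "N \<in> null_sets lebesgue" "d > 0"
  obtains T :: "'a::euclidean_space set"
    where "open T" "N \<subseteq> T" "T \<in> lmeasurable" "measure lebesgue T < d"
proof -
  have N: "N \<in> sets lebesgue" "emeasure lebesgue N = 0"
    using assms(1) by auto
  obtain T where T: "open T" "N \<subseteq> T" "T - N \<in> lmeasurable" "emeasure lebesgue (T - N) < ennreal d"
    using sets_lebesgue_outer_open[OF N(1) assms(2)] by blast
  have T_eq: "T = (T - N) \<union> N"
    using T(2) by blast
  have T_sets: "T \<in> sets lebesgue"
    using T(3) N(1) T_eq by (metis fmeasurableD sets.Un)
  have "emeasure lebesgue T \<le> emeasure lebesgue (T - N) + emeasure lebesgue N"
    using T(3) N(1) by (subst T_eq) (intro emeasure_subadditive, auto simp: fmeasurable_def)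
  then have T_less: "emeasure lebesgue T < ennreal d"
    using T(4) N(2) by simp
  then have "T \<in> lmeasurable"
    by (intro fmeasurableI[OF T_sets]) (metis ennreal_less_top infinity_ennreal_def order.strict_trans)
  moreover have "measure lebesgue T < d"
    using T_less emeasure_eq_measure2[OF \<open>T \<in> lmeasurable\<close>] by (simp add: ennreal_less_iff)
  ultimately show thesis
    using that T(1,2) by blast
qed

lemma has_real_derivative_nonpos_increment_le:
  assumes "(f has_real_derivative D) (at x)" "D \<le> 0" "\<epsilon> > 0"
  obtains \<delta> where "\<delta> > 0"
    "\<And>u v. u \<le> x \<Longrightarrow> x \<le> v \<Longrightarrow> {u..v} \<subseteq> ball x \<delta> \<Longrightarrow> f v - f u \<le> \<epsilon> * (v - u)"
proof -
  have "(f has_derivative (\<lambda>h. D * h)) (at x)"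
    using assms(1) by (simp add: has_field_derivative_def)
  then obtain \<delta> where "\<delta> > 0" and
    \<delta>: "\<And>y. norm (y - x) < \<delta> \<Longrightarrow> norm (f y - f x - D * (y - x)) \<le> \<epsilon> * norm (y - x)"
    using assms(3) unfolding has_derivative_at_alt by blast
  show thesis
  proof (rule that[OF \<open>\<delta> > 0\<close>])
    fix u v assume "u \<le> x" "x \<le> v" "{u..v} \<subseteq> ball x \<delta>"
    moreover have "u \<in> {u..v}" "v \<in> {u..v}"
      using \<open>u \<le> x\<close> \<open>x \<le> v\<close> by auto
    ultimately have "u \<in> ball x \<delta>" "v \<in> ball x \<delta>"
      by blast+
    then have "norm (u - x) < \<delta>" "norm (v - x) < \<delta>"
      by (auto simp: dist_norm norm_minus_commute)
    then have "f v - f x - D * (v - x) \<le> \<epsilon> * (v - x)" "f x - f u - D * (x - u) \<le> \<epsilon> * (x - u)"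
      using \<delta>[of u] \<delta>[of v] \<open>u \<le> x\<close> \<open>x \<le> v\<close> by (auto simp: abs_le_iff algebra_simps)
    moreover have "D * (v - x) \<le> 0" "D * (x - u) \<le> 0"
      using \<open>D \<le> 0\<close> \<open>u \<le> x\<close> \<open>x \<le> v\<close> by (auto simp: mult_nonpos_nonneg)
    ultimately show "f v - f u \<le> \<epsilon> * (v - u)"
      by (simp add: algebra_simps)
  qed
qed

lemma nonpos_derivative_gauge:
  assumes "open T" "N \<subseteq> T" "\<epsilon> > 0"
    and deriv: "\<And>x. x \<in> {a..b} \<Longrightarrow> x \<notin> N \<Longrightarrow> \<exists>D\<le>0. (f has_real_derivative D) (at x)"
  obtains \<delta> where "\<And>x. \<delta> x > 0" "\<And>x. x \<in> N \<Longrightarrow> ball x (\<delta> x) \<subseteq> T"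
    "\<And>x u v. x \<in> {a..b} \<Longrightarrow> x \<notin> N \<Longrightarrow> u \<le> x \<Longrightarrow> x \<le> v \<Longrightarrow> {u..v} \<subseteq> ball x (\<delta> x) \<Longrightarrow>
       f v - f u \<le> \<epsilon> * (v - u)"
proof -
  have "\<exists>\<delta>>0. (x \<in> N \<longrightarrow> ball x \<delta> \<subseteq> T) \<and> (x \<in> {a..b} \<and> x \<notin> N \<longrightarrow>
      (\<forall>u v. u \<le> x \<longrightarrow> x \<le> v \<longrightarrow> {u..v} \<subseteq> ball x \<delta> \<longrightarrow> f v - f u \<le> \<epsilon> * (v - u)))" for x
  proof (cases "x \<in> N")
    case True
    then show ?thesis
      using assms(1,2) open_contains_ball by blast
  next
    case False
    show ?thesis
    proof (cases "x \<in> {a..b}")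
      case True
      then obtain D where "D \<le> 0" "(f has_real_derivative D) (at x)"
        using deriv False by blast
      then show ?thesis
        using has_real_derivative_nonpos_increment_le[OF _ _ \<open>\<epsilon> > 0\<close>] False by metis
    next
      case outside: False
      show ?thesis
        using False outside by (intro exI[of _ 1]) auto
    qed
  qed
  then show thesis
    using that by metis
qed

lemma tagged_division_increment_le:
  fixes f :: "real \<Rightarrow> real"
  assumes "a \<le> b" "p tagged_division_of {a..b}" "\<epsilon> \<ge> 0"
    and "\<And>x K. (x, K) \<in> p \<Longrightarrow> x \<notin> N \<Longrightarrow> f (Sup K) - f (Inf K) \<le> \<epsilon> * (Sup K - Inf K)"
  shows "f b - f a \<le> \<epsilon> * (b - a) + (\<Sum>(x, K)\<in>{(x, K)\<in>p. x \<in> N}. \<bar>f (Sup K) - f (Inf K)\<bar>)"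
proof -
  let ?P = "{(x, K)\<in>p. x \<in> N}"
  let ?inc = "\<lambda>(x, K). f (Sup K) - f (Inf K)"
  let ?len = "\<lambda>(x, K). Sup K - Inf K"
  let ?var = "\<lambda>(x, K). \<bar>f (Sup K) - f (Inf K)\<bar>"
  have p: "p tagged_partial_division_of {a..b}"
    using assms(2) by (simp add: tagged_division_of_def)
  then have "finite p"
    by (rule tagged_partial_division_ofD(1))
  have "?inc xK \<le> \<epsilon> * ?len xK + (if xK \<in> ?P then ?var xK else 0)" if xK: "xK \<in> p" for xK
  proof (cases xK)
    case (Pair x K)
    then have "(x, K) \<in> p"
      using xK by simp
    then have "Inf K \<le> Sup K"
      using tagged_partial_division_of_realD(3,4)[OF p] by fastforce
    then have "\<epsilon> * (Sup K - Inf K) \<ge> 0"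
      using assms(3) by simp
    then show ?thesis
      using xK assms(4)[of x K] Pair by auto
  qed
  then have "(\<Sum>xK\<in>p. ?inc xK) \<le> (\<Sum>xK\<in>p. \<epsilon> * ?len xK + (if xK \<in> ?P then ?var xK else 0))"
    by (rule sum_mono)
  also have "\<dots> = \<epsilon> * (\<Sum>xK\<in>p. ?len xK) + (\<Sum>xK\<in>?P. ?var xK)"
    using \<open>finite p\<close> by (simp add: sum.distrib sum_distrib_left sum.If_cases Int_absorb1 subset_eq)
  also have "(\<Sum>xK\<in>p. ?len xK) = b - a"
    using additive_tagged_division_1[OF assms(1,2), of "\<lambda>x. x"] by simp
  also have "(\<Sum>xK\<in>p. ?inc xK) = f b - f a"
    using additive_tagged_division_1[OF assms(1,2), of f] by simp
  finally show ?thesis .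
qed

(* Cousin's lemma gives a fine tagged division: tags outside N see increments at most
   epsilon times the length, while the intervals tagged in N lie in an open set T of measure
   below the absolute-continuity threshold, so their total variation is below epsilon. *)
lemma abs_cont_on_increment_le:
  fixes f :: "real \<Rightarrow> real"
  assumes "a \<le> b" "abs_cont_on a b f" "N \<in> null_sets lebesgue" "\<epsilon> > 0"
    and deriv: "\<And>x. x \<in> {a..b} \<Longrightarrow> x \<notin> N \<Longrightarrow> \<exists>D\<le>0. (f has_real_derivative D) (at x)"
  shows "f b - f a \<le> \<epsilon> * (b - a) + \<epsilon>"
proof -
  obtain d where "d > 0" and d: "\<And>p. p tagged_partial_division_of {a..b} \<Longrightarrow>
      (\<Sum>(x, K)\<in>p. measure lebesgue K) < d \<Longrightarrow> (\<Sum>(x, K)\<in>p. \<bar>f (Sup K) - f (Inf K)\<bar>) < \<epsilon>"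
    using abs_cont_on_tagged_partial_division[OF assms(2,4)] by blast
  obtain T :: "real set" where "open T" "N \<subseteq> T" "T \<in> lmeasurable" "measure lebesgue T < d"
    using lebesgue_null_set_open_cover[OF assms(3) \<open>d > 0\<close>] by blast
  obtain \<delta> where \<delta>: "\<And>x. \<delta> x > 0" and \<delta>_N: "\<And>x. x \<in> N \<Longrightarrow> ball x (\<delta> x) \<subseteq> T"
    and \<delta>_inc: "\<And>x u v. x \<in> {a..b} \<Longrightarrow> x \<notin> N \<Longrightarrow> u \<le> x \<Longrightarrow> x \<le> v \<Longrightarrow> {u..v} \<subseteq> ball x (\<delta> x) \<Longrightarrow>
        f v - f u \<le> \<epsilon> * (v - u)"
    using nonpos_derivative_gauge[OF \<open>open T\<close> \<open>N \<subseteq> T\<close> \<open>\<epsilon> > 0\<close> deriv] by blast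
  obtain p where p: "p tagged_division_of {a..b}" and fine: "(\<lambda>x. ball x (\<delta> x)) fine p"
    using fine_division_exists[OF gauge_ball_dependent, of \<delta> a b] \<delta> by (auto simp: cbox_interval)
  have p': "p tagged_partial_division_of {a..b}"
    using p by (simp add: tagged_division_of_def)
  let ?P = "{(x, K)\<in>p. x \<in> N}"
  have "f b - f a \<le> \<epsilon> * (b - a) + (\<Sum>(x, K)\<in>?P. \<bar>f (Sup K) - f (Inf K)\<bar>)"
  proof (rule tagged_division_increment_le[OF assms(1) p])
    fix x K assume xK: "(x, K) \<in> p" and "x \<notin> N"
    have "K \<subseteq> ball x (\<delta> x)"
      using fine xK by (auto simp: fine_def)
    then show "f (Sup K) - f (Inf K) \<le> \<epsilon> * (Sup K - Inf K)"
      using \<delta>_inc[of x "Inf K" "Sup K"] tagged_partial_division_of_realD[OF p' xK] \<open>x \<notin> N\<close>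
      by auto
  qed (use \<open>\<epsilon> > 0\<close> in simp)
  moreover have P: "?P tagged_partial_division_of {a..b}"
    by (rule tagged_partial_division_subset[OF p']) auto
  have "K \<subseteq> T" if "(x, K) \<in> ?P" for x K
  proof -
    have "K \<subseteq> ball x (\<delta> x)"
      using that fine by (auto simp: fine_def)
    then show ?thesis
      using that \<delta>_N[of x] by auto
  qed
  then have "(\<Sum>(x, K)\<in>?P. measure lebesgue K) < d"
    using sum_measure_tagged_partial_division_le[OF P _ \<open>T \<in> lmeasurable\<close>] \<open>measure lebesgue T < d\<close>
    by fastforce
  then have "(\<Sum>(x, K)\<in>?P. \<bar>f (Sup K) - f (Inf K)\<bar>) < \<epsilon>"
    by (rule d[OF P])
  ultimately show ?thesis
    by linarith
qed

lemma abs_cont_on_antimono: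
  fixes f :: "real \<Rightarrow> real"
  assumes "a \<le> b" "abs_cont_on a b f" "N \<in> null_sets lebesgue"
    and "\<And>x. x \<in> {a..b} \<Longrightarrow> x \<notin> N \<Longrightarrow> \<exists>D\<le>0. (f has_real_derivative D) (at x)"
  shows "f b \<le> f a"
proof (rule field_le_epsilon)
  fix e :: real assume "e > 0"
  define \<epsilon> where "\<epsilon> = e / (b - a + 1)"
  have "\<epsilon> > 0"
    using \<open>e > 0\<close> assms(1) by (simp add: \<epsilon>_def)
  have "f b - f a \<le> \<epsilon> * (b - a) + \<epsilon>"
    by (rule abs_cont_on_increment_le[OF assms(1-3) \<open>\<epsilon> > 0\<close> assms(4)])
  also have "\<dots> = \<epsilon> * (b - a + 1)"
    by (simp add: algebra_simps)
  also have "\<dots> = e"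
    using assms(1) by (simp add: \<epsilon>_def)
  finally show "f b \<le> f a + e"
    by simp
qed

lemma sum_rate_deriv_atMost:
  "i \<le> I \<Longrightarrow> (\<Sum>j\<le>i. rate_deriv I \<theta> j) = - \<theta> i"
  by (induction i) (simp_all add: rate_deriv_def)

lemma sum_atMost_cumulative:
  fixes g :: "nat \<Rightarrow> real"
  shows "(\<Sum>i\<le>n. \<Sum>j\<le>i. g j) = (\<Sum>j\<le>n. (real n + 1 - real j) * g j)"
proof (induction n)
  case (Suc n)
  have "(\<Sum>i\<le>Suc n. \<Sum>j\<le>i. g j) = (\<Sum>j\<le>n. (real n + 1 - real j) * g j + g j) + g (Suc n)"
    using Suc by (simp add: sum.distrib)
  also have "\<dots> = (\<Sum>j\<le>Suc n. (real (Suc n) + 1 - real j) * g j)"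
    by (simp add: algebra_simps)
  finally show ?case .
qed simp

lemma simplexI_sum_cumulative:
  assumes "g \<in> simplexI I"
  shows "(\<Sum>i\<le>I. \<Sum>j\<le>i. g j) = real (I + 1) - (\<Sum>k\<le>I+1. real k * g k)"
proof -
  have total: "(\<Sum>j\<le>I. g j) = 1 - g (I + 1)"
    using assms unfolding simplexI_def by simp
  have "(\<Sum>i\<le>I. \<Sum>j\<le>i. g j) = (real I + 1) * (\<Sum>j\<le>I. g j) - (\<Sum>j\<le>I. real j * g j)"
    unfolding sum_atMost_cumulative by (simp add: algebra_simps sum_subtractf sum_distrib_left)
  also have "\<dots> = real (I + 1) - (\<Sum>k\<le>I+1. real k * g k)"
    unfolding total by (simp add: algebra_simps)
  finally show ?thesis .
qed

lemma valid_occupancyE: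
  assumes "valid_occupancy I \<beta> \<gamma>"
  obtains \<theta> N where "N \<in> null_sets lebesgue"
    "\<And>j. j \<le> I + 1 \<Longrightarrow> abs_cont_on 0 \<beta> (\<lambda>x. \<gamma> x j)"
    "\<And>x. x \<in> {0..\<beta>} \<Longrightarrow> x \<notin> N \<Longrightarrow> \<theta> x \<in> simplexI I"
    "\<And>x j. x \<in> {0..\<beta>} \<Longrightarrow> x \<notin> N \<Longrightarrow> j \<le> I + 1 \<Longrightarrow>
       ((\<lambda>t. \<gamma> t j) has_real_derivative rate_deriv I (\<theta> x) j) (at x)"
proof -
  obtain \<theta> where "AE x in lebesgue. x \<in> {0..\<beta>} \<longrightarrow>
      (\<forall>j\<le>I+1. ((\<lambda>t. \<gamma> t j) has_real_derivative rate_deriv I (\<theta> x) j) (at x)) \<and> \<theta> x \<in> simplexI I"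
    using assms unfolding valid_occupancy_def by blast
  then obtain N where "N \<in> null_sets lebesgue" and N: "\<And>x. x \<notin> N \<Longrightarrow> x \<in> {0..\<beta>} \<longrightarrow>
      (\<forall>j\<le>I+1. ((\<lambda>t. \<gamma> t j) has_real_derivative rate_deriv I (\<theta> x) j) (at x)) \<and> \<theta> x \<in> simplexI I"
    by (auto elim!: AE_E3)
  then show thesis
    using that[of N \<theta>] assms unfolding valid_occupancy_def by blast
qed

lemma valid_occupancy_cumulative_antimono:
  assumes "valid_occupancy I \<beta> \<gamma>" "0 \<le> \<beta>" "i \<le> I"
  shows "(\<Sum>j\<le>i. \<gamma> \<beta> j) \<le> (\<Sum>j\<le>i. \<gamma> 0 j)"
proof -
  obtain \<theta> N where N: "N \<in> null_sets lebesgue"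
    and ac: "\<And>j. j \<le> I + 1 \<Longrightarrow> abs_cont_on 0 \<beta> (\<lambda>x. \<gamma> x j)"
    and \<theta>: "\<And>x. x \<in> {0..\<beta>} \<Longrightarrow> x \<notin> N \<Longrightarrow> \<theta> x \<in> simplexI I"
    and deriv: "\<And>x j. x \<in> {0..\<beta>} \<Longrightarrow> x \<notin> N \<Longrightarrow> j \<le> I + 1 \<Longrightarrow>
       ((\<lambda>t. \<gamma> t j) has_real_derivative rate_deriv I (\<theta> x) j) (at x)"
    using valid_occupancyE[OF assms(1)] by metis
  show ?thesis
  proof (rule abs_cont_on_antimono[OF assms(2) _ N])
    show "abs_cont_on 0 \<beta> (\<lambda>x. \<Sum>j\<le>i. \<gamma> x j)"
      using assms(3) by (intro abs_cont_on_sum ac) auto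
    fix x assume x: "x \<in> {0..\<beta>}" "x \<notin> N"
    have "((\<lambda>x. \<Sum>j\<le>i. \<gamma> x j) has_real_derivative (\<Sum>j\<le>i. rate_deriv I (\<theta> x) j)) (at x)"
      using assms(3) by (intro DERIV_sum deriv[OF x]) auto
    moreover have "(\<Sum>j\<le>i. rate_deriv I (\<theta> x) j) \<le> 0"
      using sum_rate_deriv_atMost[OF assms(3)] \<theta>[OF x] assms(3) unfolding simplexI_def by auto
    ultimately show "\<exists>D\<le>0. ((\<lambda>x. \<Sum>j\<le>i. \<gamma> x j) has_real_derivative D) (at x)"
      by blast
  qed
qed

lemma valid_occupancy_total_cumulative_le:
  assumes "valid_occupancy I \<beta> \<gamma>" "0 \<le> \<beta>"
  shows "(\<Sum>i\<le>I. \<Sum>j\<le>i. \<gamma> 0 j) \<le> (\<Sum>i\<le>I. \<Sum>j\<le>i. \<gamma> \<beta> j) + \<beta>"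
proof -
  obtain \<theta> N where N: "N \<in> null_sets lebesgue"
    and ac: "\<And>j. j \<le> I + 1 \<Longrightarrow> abs_cont_on 0 \<beta> (\<lambda>x. \<gamma> x j)"
    and \<theta>: "\<And>x. x \<in> {0..\<beta>} \<Longrightarrow> x \<notin> N \<Longrightarrow> \<theta> x \<in> simplexI I"
    and deriv: "\<And>x j. x \<in> {0..\<beta>} \<Longrightarrow> x \<notin> N \<Longrightarrow> j \<le> I + 1 \<Longrightarrow>
       ((\<lambda>t. \<gamma> t j) has_real_derivative rate_deriv I (\<theta> x) j) (at x)"
    using valid_occupancyE[OF assms(1)] by metis
  define H where "H x = - ((\<Sum>i\<le>I. \<Sum>j\<le>i. \<gamma> x j) + x)" for x
  have "H \<beta> \<le> H 0"
  proof (rule abs_cont_on_antimono[OF assms(2) _ N])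
    show "abs_cont_on 0 \<beta> H"
      unfolding H_def using abs_cont_on_affine[of 0 \<beta> 0 1]
      by (intro abs_cont_on_uminus abs_cont_on_add abs_cont_on_sum ac) auto
    fix x assume x: "x \<in> {0..\<beta>}" "x \<notin> N"
    have "(H has_real_derivative - ((\<Sum>i\<le>I. \<Sum>j\<le>i. rate_deriv I (\<theta> x) j) + 1)) (at x)"
      unfolding H_def by (intro DERIV_minus DERIV_add DERIV_sum DERIV_ident deriv[OF x]) auto
    moreover have "(\<Sum>i\<le>I. \<Sum>j\<le>i. rate_deriv I (\<theta> x) j) = - (\<Sum>i\<le>I. \<theta> x i)"
      by (simp add: sum_rate_deriv_atMost sum_negf)
    moreover have "(\<Sum>i\<le>I. \<theta> x i) \<le> 1"
    proof -
      have "0 \<le> \<theta> x (I + 1)" "(\<Sum>i\<le>I. \<theta> x i) + \<theta> x (I + 1) = 1"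
        using \<theta>[OF x] unfolding simplexI_def by auto
      then show ?thesis
        by linarith
    qed
    ultimately show "\<exists>D\<le>0. (H has_real_derivative D) (at x)"
      by (intro exI conjI) auto
  qed
  then show ?thesis
    unfolding H_def by simp
qed

lemma feasible_imp_cumulative_le:
  assumes "feasible I \<alpha> \<omega> \<beta>" "0 \<le> \<beta>"
  shows "(\<forall>i\<le>I. (\<Sum>j\<le>i. \<omega> j) \<le> (\<Sum>j\<le>i. \<alpha> j)) \<and>
    (\<Sum>i\<le>I. \<Sum>j\<le>i. \<alpha> j) \<le> (\<Sum>i\<le>I. \<Sum>j\<le>i. \<omega> j) + \<beta>"
proof -
  obtain \<gamma> where \<gamma>: "valid_occupancy I \<beta> \<gamma>"
    and \<gamma>_0: "\<forall>j\<le>I+1. \<gamma> 0 j = \<alpha> j" and \<gamma>_\<beta>: "\<forall>j\<le>I+1. \<gamma> \<beta> j = \<omega> j"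
    using assms(1) unfolding feasible_def by blast
  show ?thesis
    using valid_occupancy_cumulative_antimono[OF \<gamma> assms(2)] valid_occupancy_total_cumulative_le[OF \<gamma> assms(2)]
      \<gamma>_0 \<gamma>_\<beta> by simp
qed

lemma simplexI_mean_le_iff:
  assumes "\<alpha> \<in> simplexI I" "\<omega> \<in> simplexI I"
  shows "(\<Sum>i\<le>I. real i * \<omega> i) + real (I + 1) * \<omega> (I + 1) \<le> (\<Sum>k\<le>I+1. real k * \<alpha> k) + \<beta> \<longleftrightarrow>
    (\<Sum>i\<le>I. \<Sum>j\<le>i. \<alpha> j) \<le> (\<Sum>i\<le>I. \<Sum>j\<le>i. \<omega> j) + \<beta>"
proof -
  have "(\<Sum>i\<le>I. real i * \<omega> i) + real (I + 1) * \<omega> (I + 1) = (\<Sum>k\<le>I+1. real k * \<omega> k)"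
    by simp
  then show ?thesis
    using simplexI_sum_cumulative[OF assms(1)] simplexI_sum_cumulative[OF assms(2)] by linarith
qed

lemma feasible_constant_rate:
  assumes "\<beta> > 0" "\<alpha> \<in> simplexI I" "\<omega> \<in> simplexI I" "\<theta> \<in> simplexI I"
    and rate: "\<And>j. j \<le> I + 1 \<Longrightarrow> \<omega> j = \<alpha> j + \<beta> * rate_deriv I \<theta> j"
  shows "feasible I \<alpha> \<omega> \<beta>"
proof -
  define \<gamma> where "\<gamma> x j = \<alpha> j + x * rate_deriv I \<theta> j" for x j
  have convex: "\<gamma> x j = (1 - x / \<beta>) * \<alpha> j + (x / \<beta>) * \<omega> j" if "j \<le> I + 1" for x j
    using rate[OF that] \<open>\<beta> > 0\<close> by (simp add: \<gamma>_def field_simps)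
  have "\<gamma> x \<in> simplexI I" if "x \<in> {0..\<beta>}" for x
  proof -
    have "0 \<le> x / \<beta>" "x / \<beta> \<le> 1"
      using that \<open>\<beta> > 0\<close> by auto
    have "0 \<le> \<gamma> x j" if j: "j \<le> I + 1" for j
    proof -
      have "0 \<le> \<alpha> j" "0 \<le> \<omega> j"
        using assms(2,3) j unfolding simplexI_def by auto
      then show ?thesis
        unfolding convex[OF j] using \<open>0 \<le> x / \<beta>\<close> \<open>x / \<beta> \<le> 1\<close>
        by (intro add_nonneg_nonneg mult_nonneg_nonneg) simp_all
    qed
    moreover have "(\<Sum>j\<le>I+1. \<gamma> x j) = (\<Sum>j\<le>I+1. (1 - x / \<beta>) * \<alpha> j + (x / \<beta>) * \<omega> j)"
      by (rule sum.cong) (simp_all add: convex)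
    then have "(\<Sum>j\<le>I+1. \<gamma> x j) = (1 - x / \<beta>) * (\<Sum>j\<le>I+1. \<alpha> j) + (x / \<beta>) * (\<Sum>j\<le>I+1. \<omega> j)"
      by (simp only: sum.distrib sum_distrib_left)
    ultimately show ?thesis
      using assms(2,3) unfolding simplexI_def by simp
  qed
  moreover have "((\<lambda>t. \<gamma> t j) has_real_derivative rate_deriv I \<theta> j) (at x)" for x j
    unfolding \<gamma>_def by (auto intro!: derivative_eq_intros)
  ultimately have "valid_occupancy I \<beta> \<gamma>"
    unfolding valid_occupancy_def \<gamma>_def using \<open>\<theta> \<in> simplexI I\<close>
    by (intro conjI allI impI ballI exI[of _ "\<lambda>_. \<theta>"] AE_I2 abs_cont_on_affine) auto
  moreover have "\<gamma> \<beta> j = \<omega> j" if "j \<le> I + 1" for j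
    using rate[OF that] by (simp add: \<gamma>_def mult.commute)
  ultimately show ?thesis
    unfolding feasible_def by (intro exI[of _ \<gamma>]) (auto simp: \<gamma>_def)
qed

lemma constant_rate_exists:
  assumes "\<beta> > 0" "\<alpha> \<in> simplexI I" "\<omega> \<in> simplexI I"
    and cumulative: "\<forall>i\<le>I. (\<Sum>j\<le>i. \<omega> j) \<le> (\<Sum>j\<le>i. \<alpha> j)"
    and total: "(\<Sum>i\<le>I. \<Sum>j\<le>i. \<alpha> j) \<le> (\<Sum>i\<le>I. \<Sum>j\<le>i. \<omega> j) + \<beta>"
  shows "\<exists>\<theta>\<in>simplexI I. \<forall>j\<le>I+1. \<omega> j = \<alpha> j + \<beta> * rate_deriv I \<theta> j"
proof -
  define A W where "A i = (\<Sum>j\<le>i. \<alpha> j)" and "W i = (\<Sum>j\<le>i. \<omega> j)" for i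
  define S where "S = (\<Sum>i\<le>I. A i - W i)"
  define \<theta> where "\<theta> i = (if i \<le> I then (A i - W i) / \<beta> else if i = I + 1 then 1 - S / \<beta> else 0)" for i
  have "S \<le> \<beta>"
    using total unfolding S_def A_def W_def by (simp add: sum_subtractf)
  have "\<theta> \<in> simplexI I"
  proof -
    have "(\<Sum>i\<le>I. \<theta> i) = S / \<beta>"
      unfolding \<theta>_def S_def by (simp add: sum_divide_distrib)
    then show ?thesis
      using cumulative \<open>S \<le> \<beta>\<close> \<open>\<beta> > 0\<close>
      unfolding simplexI_def by (auto simp: \<theta>_def A_def W_def)
  qed
  moreover have "\<omega> j = \<alpha> j + \<beta> * rate_deriv I \<theta> j" if j: "j \<le> I + 1" for j
  proof -
    consider "j = 0" | i where "j = Suc i" "j \<le> I" | "j = I + 1"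
      using j by (cases j; cases "j \<le> I") auto
    then show ?thesis
    proof cases
      case 1
      then show ?thesis
        using \<open>\<beta> > 0\<close> by (simp add: rate_deriv_def \<theta>_def A_def W_def)
    next
      case (2 i)
      then show ?thesis
        using \<open>\<beta> > 0\<close> by (simp add: rate_deriv_def \<theta>_def A_def W_def field_simps)
    next
      case 3
      have "A I = 1 - \<alpha> (I + 1)" "W I = 1 - \<omega> (I + 1)"
        using assms(2,3) unfolding simplexI_def A_def W_def by simp_all
      then have "\<omega> (I + 1) = \<alpha> (I + 1) + (A I - W I)"
        by simp
      then show ?thesis
        using 3 \<open>\<beta> > 0\<close> by (simp add: rate_deriv_def \<theta>_def)
    qed
  qed
  ultimately show ?thesis
    by blast
qed

theorem lemma2p4:
  fixes I :: nat and \<beta> :: real and \<alpha> \<omega> :: "nat \<Rightarrow> real"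
  assumes "\<beta> > 0" and "\<alpha> \<in> simplexI I" and "\<omega> \<in> simplexI I" and "\<alpha> 0 > 0"
  shows "feasible I \<alpha> \<omega> \<beta> \<longleftrightarrow>
    (\<forall>i\<le>I. (\<Sum>j\<le>i. \<alpha> j) \<ge> (\<Sum>j\<le>i. \<omega> j)) \<and>
    (\<Sum>i\<le>I. real i * \<omega> i) + real (I + 1) * \<omega> (I + 1) \<le> (\<Sum>k\<le>I+1. real k * \<alpha> k) + \<beta>"
  unfolding simplexI_mean_le_iff[OF assms(2,3)]
proof
  assume "feasible I \<alpha> \<omega> \<beta>"
  then show "(\<forall>i\<le>I. (\<Sum>j\<le>i. \<omega> j) \<le> (\<Sum>j\<le>i. \<alpha> j)) \<and>
      (\<Sum>i\<le>I. \<Sum>j\<le>i. \<alpha> j) \<le> (\<Sum>i\<le>I. \<Sum>j\<le>i. \<omega> j) + \<beta>"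
    using \<open>\<beta> > 0\<close> by (intro feasible_imp_cumulative_le) simp_all
next
  assume "(\<forall>i\<le>I. (\<Sum>j\<le>i. \<omega> j) \<le> (\<Sum>j\<le>i. \<alpha> j)) \<and>
      (\<Sum>i\<le>I. \<Sum>j\<le>i. \<alpha> j) \<le> (\<Sum>i\<le>I. \<Sum>j\<le>i. \<omega> j) + \<beta>"
  then obtain \<theta> where "\<theta> \<in> simplexI I" and "\<forall>j\<le>I+1. \<omega> j = \<alpha> j + \<beta> * rate_deriv I \<theta> j"
    using constant_rate_exists[OF assms(1-3)] by blast
  then show "feasible I \<alpha> \<omega> \<beta>"
    using feasible_constant_rate[OF assms(1-3)] by blast
qed

end
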